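(* Let $Q=Q(p,t)$, $p\in[0,S]$, $t\in[0,T]$, satisfy $dQ(p,t)=\mu_Q(p,t)dt+\int_0^1\tilde\sigma_Q(p,s,t)B(ds,dt)$ with $\tilde\sigma_Q=\sigma_Qb_Q$, $\int_0^1b_Q^2(p,s,t)ds=1$, $Q$ strictly decreasing and $C^2$ in $p$, and $\tilde\sigma_Q$ $C^1$ in $p$. Assume the demand curve depends linearly on $p$ in the sense that $$\frac{\frac{\partial\tilde\sigma_Q}{\partial p}(p,s,t)}{\frac{\partial Q}{\partial p}(p,t)}=h_Q(s,t)\quad\text{and}\quad\frac{\partial^2Q}{\partial p^2}(p,t)=0$$ for a bounded function $h_Q$. If there exists a bounded function $\lambda_Q=\lambda_Q(s,t)$ such that, for every $t\in[0,T]$ (and $p\in[0,S]$), $\mu_Q(p,t)=\int_0^1\tilde\sigma_Q(p,s,t)\lambda_Q(s,t)\,ds$, then the market price of risk equation $$\int_0^1\tilde\sigma_Q(p,s,t)\lambda(s,t)\,ds=A(p,t),\qquad p\in[0,S],\ t\in[0,T],$$ has the bounded solution $\lambda(s,t)=\lambda_Q(s,t)-h_Q(s,t)$.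
   Context: $B$ is a Brownian sheet on $[0,1]\times[0,T]$ on a filtered probability space generating the filtration; $\int_0^1 b(s,t)B(ds,dt)$ denotes the (differential of the) stochastic integral against it. $\mu_Q,\sigma_Q,b_Q$ are adapted real-valued processes. Notation: $C(p,t)=-\big(\frac{\partial Q}{\partial p}(p,t)\big)^{-1}\int_0^1\frac{\partial\tilde\sigma_Q}{\partial p}(p,s,t)\tilde\sigma_Q(p,s,t)ds$ and $A(p,t)=\mu_Q(p,t)+\frac12\frac{\partial^2Q}{\partial p^2}(p,t)\Big(\frac{\sigma_Q(p,t)}{\frac{\partial Q}{\partial p}(p,t)}\Big)^2+C(p,t)$. *)

theory Defs
  imports "HOL-Analysis.Analysis"
begin

text \<open>Conventions: sig p s t stands for tilde-sigma_Q(p,s,t); Qp, Qpp are the first and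
second p-derivatives of Q; sigp p s t is the p-derivative of tilde-sigma_Q.\<close>

definition C_fn ::
  "(real \<Rightarrow> real \<Rightarrow> real) \<Rightarrow> (real \<Rightarrow> real \<Rightarrow> real \<Rightarrow> real) \<Rightarrow>
   (real \<Rightarrow> real \<Rightarrow> real \<Rightarrow> real) \<Rightarrow> real \<Rightarrow> real \<Rightarrow> real" where
  "C_fn Qp sig sigp p t =
     - inverse (Qp p t) * (LINT s:{0..1}|lborel. sigp p s t * sig p s t)"

definition A_fn ::
  "(real \<Rightarrow> real \<Rightarrow> real) \<Rightarrow> (real \<Rightarrow> real \<Rightarrow> real) \<Rightarrow> (real \<Rightarrow> real \<Rightarrow> real) \<Rightarrow>
   (real \<Rightarrow> real \<Rightarrow> real) \<Rightarrow> (real \<Rightarrow> real \<Rightarrow> real \<Rightarrow> real) \<Rightarrow>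
   (real \<Rightarrow> real \<Rightarrow> real \<Rightarrow> real) \<Rightarrow> real \<Rightarrow> real \<Rightarrow> real" where
  "A_fn mu Qp Qpp sigQ sig sigp p t =
     mu p t + 1/2 * Qpp p t * (sigQ p t / Qp p t)^2 + C_fn Qp sig sigp p t"

end

theory Submission
  imports Defs
begin

text \<open>Since the second derivative of the demand curve vanishes, the Ito correction term in A drops
out, and the linearity assumption \<open>\<partial>\<^sub>p\<sigma>\<^sub>Q = h\<^sub>Q \<partial>\<^sub>pQ\<close> turns the drift correction C into
\<open>-\<integral>\<sigma>\<^sub>Q h\<^sub>Q ds\<close>. Together with \<open>\<mu>\<^sub>Q = \<integral>\<sigma>\<^sub>Q \<lambda>\<^sub>Q ds\<close> this gives \<open>A = \<integral>\<sigma>\<^sub>Q (\<lambda>\<^sub>Q - h\<^sub>Q) ds\<close>. The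
only analytic point is that the integrals may be subtracted: \<open>b\<^sub>Q\<close> has unit \<open>L\<^sup>2\<close> norm and
\<open>\<lambda>\<^sub>Q\<close>, \<open>h\<^sub>Q\<close> are bounded, so \<open>b\<^sub>Q \<lambda>\<^sub>Q\<close> and \<open>b\<^sub>Q h\<^sub>Q\<close> are integrable on [0,1].\<close>

lemma abs_le_1_plus_square: "\<bar>x :: real\<bar> \<le> 1 + x\<^sup>2"
proof -
  have "0 \<le> (\<bar>x\<bar> - 1)\<^sup>2" by simp
  then show ?thesis by (simp add: power2_diff)
qed

lemma set_integrable_square_of_integral_nonzero:
  fixes b :: "'a \<Rightarrow> real"
  assumes "(LINT x:A|M. (b x)\<^sup>2) \<noteq> 0"
  shows "set_integrable M A (\<lambda>x. (b x)\<^sup>2)"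
  using assms unfolding set_integrable_def set_lebesgue_integral_def
  by (metis not_integrable_integral_eq)

lemma set_integrable_mult_bounded:
  fixes b g :: "'a \<Rightarrow> real"
  assumes A: "A \<in> sets M" "emeasure M A < \<infinity>"
    and b_meas: "b \<in> borel_measurable M" and b_sq: "set_integrable M A (\<lambda>x. (b x)\<^sup>2)"
    and g_meas: "g \<in> borel_measurable M" and g_bdd: "\<forall>x\<in>A. \<bar>g x\<bar> \<le> K"
  shows "set_integrable M A (\<lambda>x. b x * g x)"
proof (rule set_integrable_bound)
  have "set_integrable M A (\<lambda>_. 1 :: real)"
    using A unfolding set_integrable_def by simp
  then show "set_integrable M A (\<lambda>x. \<bar>K\<bar> * (1 + (b x)\<^sup>2))"
    using set_integral_add(1) b_sq by (intro set_integrable_mult_right) blast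
  show "set_borel_measurable M A (\<lambda>x. b x * g x)"
    unfolding set_borel_measurable_def using A b_meas g_meas by measurable
  show "AE x in M. x \<in> A \<longrightarrow> norm (b x * g x) \<le> norm (\<bar>K\<bar> * (1 + (b x)\<^sup>2))"
  proof (intro AE_I2 impI)
    fix x assume "x \<in> A"
    then have "\<bar>g x\<bar> \<le> \<bar>K\<bar>" using g_bdd by force
    then have "\<bar>b x\<bar> * \<bar>g x\<bar> \<le> (1 + (b x)\<^sup>2) * \<bar>K\<bar>"
      using abs_le_1_plus_square by (intro mult_mono) auto
    then show "norm (b x * g x) \<le> norm (\<bar>K\<bar> * (1 + (b x)\<^sup>2))"
      by (simp add: abs_mult mult.commute)
  qed
qed

lemma set_integrable_unit_square_integral_mult_bounded:
  fixes b g :: "real \<Rightarrow> real"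
  assumes "b \<in> borel_measurable lborel" "(LINT s:{0..1}|lborel. (b s)\<^sup>2) = 1"
    and "g \<in> borel_measurable lborel" "\<forall>s\<in>{0..1}. \<bar>g s\<bar> \<le> K"
  shows "set_integrable lborel {0..1} (\<lambda>s. b s * g s)"
  using assms set_integrable_square_of_integral_nonzero[of lborel "{0..1}" b]
  by (intro set_integrable_mult_bounded[where K = K]) auto

lemma C_fn_linear_demand:
  assumes sig: "\<forall>s. sig p s t = sigQ p t * b s"
    and lin: "\<forall>s\<in>{0..1}. sigp p s t / Qp p t = h s"
  shows "C_fn Qp sig sigp p t = - sigQ p t * (LINT s:{0..1}|lborel. b s * h s)"
proof (cases "Qp p t = 0")
  case True
  \<comment> \<open>division by zero yields 0, so the linearity hypothesis forces h = 0 here\<close>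
  then have "\<forall>s\<in>{0..1}. h s = 0" using lin by force
  then have "(LINT s:{0..1}|lborel. b s * h s) = 0"
    by (subst set_lebesgue_integral_cong[where g = "\<lambda>_. 0"]) auto
  with True show ?thesis by (simp add: C_fn_def)
next
  case False
  then have "\<forall>s\<in>{0..1}. sigp p s t = h s * Qp p t"
    using lin by (simp add: field_simps)
  then have "(LINT s:{0..1}|lborel. sigp p s t * sig p s t)
      = (LINT s:{0..1}|lborel. (Qp p t * sigQ p t) * (b s * h s))"
    by (intro set_lebesgue_integral_cong) (auto simp: sig)
  with False show ?thesis by (simp add: C_fn_def)
qed

lemma A_fn_linear_demand:
  assumes sig: "\<forall>s. sig p s t = sigQ p t * b s"
    and lin: "\<forall>s\<in>{0..1}. sigp p s t / Qp p t = h s" and "Qpp p t = 0"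
    and mu: "mu p t = (LINT s:{0..1}|lborel. sig p s t * lam s)"
    and int_lam: "set_integrable lborel {0..1} (\<lambda>s. b s * lam s)"
    and int_h: "set_integrable lborel {0..1} (\<lambda>s. b s * h s)"
  shows "A_fn mu Qp Qpp sigQ sig sigp p t = (LINT s:{0..1}|lborel. sig p s t * (lam s - h s))"
proof -
  have "(LINT s:{0..1}|lborel. sig p s t * (lam s - h s))
      = (LINT s:{0..1}|lborel. sigQ p t * (b s * lam s - b s * h s))"
    by (simp add: sig algebra_simps)
  also have "\<dots> = sigQ p t * (LINT s:{0..1}|lborel. b s * lam s - b s * h s)"
    by (rule set_integral_mult_right)
  also have "\<dots> = sigQ p t * (LINT s:{0..1}|lborel. b s * lam s)
                 - sigQ p t * (LINT s:{0..1}|lborel. b s * h s)"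
    by (simp add: set_integral_diff(2)[OF int_lam int_h] right_diff_distrib)
  also have "\<dots> = A_fn mu Qp Qpp sigQ sig sigp p t"
    using C_fn_linear_demand[of sig p t sigQ b sigp Qp h] sig lin \<open>Qpp p t = 0\<close> mu
    by (simp add: A_fn_def sig mult.assoc)
  finally show ?thesis by simp
qed

theorem proposition5p6:
  fixes Q mu sigQ Qp Qpp hQ lamQ :: "real \<Rightarrow> real \<Rightarrow> real"
    and bQ sig sigp :: "real \<Rightarrow> real \<Rightarrow> real \<Rightarrow> real"
    and S T :: real
  assumes sig_eq: "\<forall>p s t. sig p s t = sigQ p t * bQ p s t"
    and b_norm: "\<forall>p\<in>{0..S}. \<forall>t\<in>{0..T}. (LINT s:{0..1}|lborel. (bQ p s t)^2) = 1"
    and b_meas: "\<forall>p\<in>{0..S}. \<forall>t\<in>{0..T}. (\<lambda>s. bQ p s t) \<in> borel_measurable lborel"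
    and Q_decr: "\<forall>t\<in>{0..T}. \<forall>p1\<in>{0..S}. \<forall>p2\<in>{0..S}. p1 < p2 \<longrightarrow> Q p2 t < Q p1 t"
    and Q_d1: "\<forall>t\<in>{0..T}. \<forall>p\<in>{0..S}.
                 ((\<lambda>q. Q q t) has_real_derivative Qp p t) (at p within {0..S})"
    and Q_d2: "\<forall>t\<in>{0..T}. \<forall>p\<in>{0..S}.
                 ((\<lambda>q. Qp q t) has_real_derivative Qpp p t) (at p within {0..S})"
    and Qpp_cont: "\<forall>t\<in>{0..T}. continuous_on {0..S} (\<lambda>p. Qpp p t)"
    and sig_d: "\<forall>t\<in>{0..T}. \<forall>s\<in>{0..1}. \<forall>p\<in>{0..S}.
                 ((\<lambda>q. sig q s t) has_real_derivative sigp p s t) (at p within {0..S})"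
    and sigp_cont: "\<forall>t\<in>{0..T}. \<forall>s\<in>{0..1}. continuous_on {0..S} (\<lambda>p. sigp p s t)"
    and lin1: "\<forall>t\<in>{0..T}. \<forall>s\<in>{0..1}. \<forall>p\<in>{0..S}. sigp p s t / Qp p t = hQ s t"
    and lin2: "\<forall>t\<in>{0..T}. \<forall>p\<in>{0..S}. Qpp p t = 0"
    and h_bdd: "\<exists>M. \<forall>s\<in>{0..1}. \<forall>t\<in>{0..T}. \<bar>hQ s t\<bar> \<le> M"
    and h_meas: "\<forall>t\<in>{0..T}. (\<lambda>s. hQ s t) \<in> borel_measurable lborel"
    and lam_bdd: "\<exists>M. \<forall>s\<in>{0..1}. \<forall>t\<in>{0..T}. \<bar>lamQ s t\<bar> \<le> M"
    and lam_meas: "\<forall>t\<in>{0..T}. (\<lambda>s. lamQ s t) \<in> borel_measurable lborel"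
    and mu_eq: "\<forall>t\<in>{0..T}. \<forall>p\<in>{0..S}.
                 mu p t = (LINT s:{0..1}|lborel. sig p s t * lamQ s t)"
  shows "(\<exists>M. \<forall>s\<in>{0..1}. \<forall>t\<in>{0..T}. \<bar>lamQ s t - hQ s t\<bar> \<le> M) \<and>
         (\<forall>p\<in>{0..S}. \<forall>t\<in>{0..T}.
            (LINT s:{0..1}|lborel. sig p s t * (lamQ s t - hQ s t))
              = A_fn mu Qp Qpp sigQ sig sigp p t)"
proof -
  obtain Mh where Mh: "\<forall>s\<in>{0..1}. \<forall>t\<in>{0..T}. \<bar>hQ s t\<bar> \<le> Mh" using h_bdd by blast
  obtain Ml where Ml: "\<forall>s\<in>{0..1}. \<forall>t\<in>{0..T}. \<bar>lamQ s t\<bar> \<le> Ml" using lam_bdd by blast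
  have "\<forall>s\<in>{0..1}. \<forall>t\<in>{0..T}. \<bar>lamQ s t - hQ s t\<bar> \<le> Ml + Mh"
    using Mh Ml by (smt (verit))
  moreover have "(LINT s:{0..1}|lborel. sig p s t * (lamQ s t - hQ s t))
                   = A_fn mu Qp Qpp sigQ sig sigp p t" if "p \<in> {0..S}" "t \<in> {0..T}" for p t
  proof (rule A_fn_linear_demand[symmetric])
    show "set_integrable lborel {0..1} (\<lambda>s. bQ p s t * lamQ s t)"
      using that b_meas b_norm lam_meas Ml
      by (intro set_integrable_unit_square_integral_mult_bounded[where K = Ml]) auto
    show "set_integrable lborel {0..1} (\<lambda>s. bQ p s t * hQ s t)"
      using that b_meas b_norm h_meas Mh
      by (intro set_integrable_unit_square_integral_mult_bounded[where K = Mh]) auto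
  qed (use that sig_eq lin1 lin2 mu_eq in auto)
  ultimately show ?thesis by blast
qed

end
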